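(* For every integer $n\ge1$, $$2^n(1+x^2)\hat{A}_n(x)=(1-x)^{n+1}P_n\!\left(\frac{1+x}{1-x}\right),\qquad \hat{B}_n(x)=(1-x)^nQ_n\!\left(\frac{1+x}{1-x}\right).$$
   Context: For $\sigma\in\mathfrak S_n$ (permutations of $[n]$), $i\in[n-1]$ is an alternating descent if either $\sigma(i)>\sigma(i+1)$ and $i$ is odd, or $\sigma(i)<\sigma(i+1)$ and $i$ is even; $\hat A_n(x)=\sum_{\sigma\in\mathfrak S_n}x^{\hat d(\sigma)}$ where $\hat d(\sigma)$ is the number of alternating descents. $\mathcal B_n$ is the set of signed permutations: bijections $\pi$ of $\{\pm1,\dots,\pm n\}$ with $\pi(-i)=-\pi(i)$, written as words $\pi(1)\cdots\pi(n)$ with $\pi(0)=0$. An index $i\in\{0\}\cup[n-1]$ is an alternating descent of $\pi$ if either $\pi(i)<\pi(i+1)$ and $i$ even, or $\pi(i)>\pi(i+1)$ and $i$ odd; $\hat B_n(x)=\sum_{\pi\in\mathcal B_n}x^{\hat d_B(\pi)}$ with $\hat d_B(\pi)$ the number of such indices. $P_n,Q_n$ are Hoffman's derivative polynomials, defined by $\frac{d^n}{dt^n}\tan t=P_n(\tan t)$ and $\frac{d^n}{dt^n}\sec t=Q_n(\tan t)\sec t$; equivalently $P_0(x)=x$, $Q_0(x)=1$, $P_{n+1}(x)=(1+x^2)P_n'(x)$, $Q_{n+1}(x)=xQ_n(x)+(1+x^2)Q_n'(x)$. *)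

theory Defs
  imports "HOL-Combinatorics.Permutations" "HOL-Computational_Algebra.Polynomial"
begin

definition alt_des :: "nat \<Rightarrow> (nat \<Rightarrow> nat) \<Rightarrow> nat" where
  "alt_des n \<sigma> = card {i \<in> {1..<n}. (\<sigma> i > \<sigma> (Suc i) \<and> odd i) \<or> (\<sigma> i < \<sigma> (Suc i) \<and> even i)}"

definition A_hat :: "nat \<Rightarrow> real \<Rightarrow> real" where
  "A_hat n x = (\<Sum>\<sigma> \<in> {\<sigma>. \<sigma> permutes {1..n}}. x ^ alt_des n \<sigma>)"

definition signed_perms :: "nat \<Rightarrow> (int \<Rightarrow> int) set" where
  "signed_perms n = {\<pi>. \<pi> permutes ({- int n..int n} - {0}) \<and> (\<forall>i. \<pi> (- i) = - \<pi> i)}"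

definition alt_des_B :: "nat \<Rightarrow> (int \<Rightarrow> int) \<Rightarrow> nat" where
  "alt_des_B n \<pi> = card {i \<in> {0..<int n}. (\<pi> i < \<pi> (i + 1) \<and> even i) \<or> (\<pi> i > \<pi> (i + 1) \<and> odd i)}"

definition B_hat :: "nat \<Rightarrow> real \<Rightarrow> real" where
  "B_hat n x = (\<Sum>\<pi> \<in> signed_perms n. x ^ alt_des_B n \<pi>)"

fun P_hoff :: "nat \<Rightarrow> real poly" where
  "P_hoff 0 = [:0, 1:]"
| "P_hoff (Suc n) = [:1, 0, 1:] * pderiv (P_hoff n)"

fun Q_hoff :: "nat \<Rightarrow> real poly" where
  "Q_hoff 0 = 1"
| "Q_hoff (Suc n) = [:0, 1:] * Q_hoff n + [:1, 0, 1:] * pderiv (Q_hoff n)"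

end

theory Submission
  imports Defs "HOL-Combinatorics.Multiset_Permutations"
begin

text \<open>
  Permutations are encoded as words, and alternating descents are counted along a word with a
  parity offset. Inserting the largest letter \<open>n + 1\<close> (for signed permutations \<open>n + 1\<close> or
  \<open>-(n + 1)\<close>) into a word and reversing the relative order of the letters after it changes the statistic only at
  the insertion point, because the reversal compensates the parity shift of the later positions.
  Summing over insertion positions gives, with \<open>M k p = (1 + x\<^sup>2) ((1 - x) p' + k p)\<close>,
  \<open>2 A_hat (n + 1) = (2 + 2 x) A_hat n + M (n - 1) (A_hat n)\<close> and
  \<open>B_hat (n + 1) = (1 + x) B_hat n + M n (B_hat n)\<close>.
  Under \<open>u = (1 + x) / (1 - x)\<close> with weight \<open>(1 - x) ^ k\<close> the operator \<open>M k\<close> becomes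
  \<open>p \<mapsto> (1 + u\<^sup>2) p'\<close>, which is Hoffman's recursion, so both identities follow by induction.
\<close>

text \<open>
  Position \<open>j\<close> of a word counts when its descent status matches the parity of \<open>p + j\<close>:
  \<open>p = 0\<close> on \<open>\<sigma>(1)\<dots>\<sigma>(n)\<close> gives \<open>alt_des\<close>, \<open>p = 1\<close> on \<open>0 \<pi>(1)\<dots>\<pi>(n)\<close> gives \<open>alt_des_B\<close>.
\<close>

definition alt_des_at :: "nat \<Rightarrow> 'a::linorder list \<Rightarrow> nat \<Rightarrow> nat" where
  "alt_des_at p xs j = of_bool ((xs ! j > xs ! Suc j) = even (p + j))"

definition alt_des_list :: "nat \<Rightarrow> 'a::linorder list \<Rightarrow> nat" where
  "alt_des_list p xs = (\<Sum>j < length xs - 1. alt_des_at p xs j)"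

lemma alt_des_list_Nil [simp]: "alt_des_list p [] = 0"
  and alt_des_list_single [simp]: "alt_des_list p [a] = 0"
  by (simp_all add: alt_des_list_def)

lemma alt_des_list_Cons_Cons:
  "alt_des_list p (a # b # zs) = of_bool ((a > b) = even p) + alt_des_list (Suc p) (b # zs)"
  unfolding alt_des_list_def by (simp add: sum.lessThan_Suc_shift alt_des_at_def del: sum.lessThan_Suc)

lemma alt_des_list_append_Cons:
  assumes "xs \<noteq> []"
  shows "alt_des_list p (xs @ b # zs) =
    alt_des_list p xs + of_bool ((last xs > b) = odd (p + length xs)) + alt_des_list (p + length xs) (b # zs)"
  using assms
proof (induction xs arbitrary: p)
  case (Cons a xs)
  show ?case
  proof (cases xs)
    case (Cons a' xs')
    then show ?thesis using Cons.IH[of "Suc p"] by (simp add: alt_des_list_Cons_Cons)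
  qed (simp add: alt_des_list_Cons_Cons)
qed simp

lemma alt_des_list_split:
  assumes "0 < k" "k < length xs"
  shows "alt_des_list p xs = alt_des_list p (take k xs) + alt_des_at p xs (k - 1) + alt_des_list (p + k) (drop k xs)"
proof -
  have "xs = take k xs @ xs ! k # drop (Suc k) xs" using assms by (simp add: id_take_nth_drop)
  moreover have ne: "take k xs \<noteq> []" using assms by (cases xs) auto
  moreover have "last (take k xs) = xs ! (k - 1)" using assms ne by (simp add: last_conv_nth)
  moreover have "drop k xs = xs ! k # drop (Suc k) xs" using assms by (simp add: Cons_nth_drop_Suc)
  ultimately show ?thesis using assms alt_des_list_append_Cons[of "take k xs" p "xs ! k" "drop (Suc k) xs"]
    by (simp add: alt_des_at_def min_def)
qed

lemma alt_des_at_map_antimono: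
  assumes "strict_antimono_on (set ys) f" "distinct ys" "Suc j < length ys"
  shows "alt_des_at (Suc p) (map f ys) j = alt_des_at p ys j"
proof -
  have "ys ! j \<noteq> ys ! Suc j" using assms(2,3) by (simp add: nth_eq_iff_index_eq)
  moreover have "ys ! j \<in> set ys" "ys ! Suc j \<in> set ys" using assms(3) by auto
  ultimately have "(f (ys ! j) > f (ys ! Suc j)) = (ys ! j < ys ! Suc j)"
    using assms(1) by (metis linorder_neq_iff monotone_onD order_less_asym)
  then show ?thesis using assms(3) \<open>ys ! j \<noteq> ys ! Suc j\<close> by (auto simp: alt_des_at_def)
qed

lemma alt_des_list_map_antimono:
  assumes "strict_antimono_on (set ys) f" "distinct ys"
  shows "alt_des_list (Suc p) (map f ys) = alt_des_list p ys"
  unfolding alt_des_list_def using alt_des_at_map_antimono[OF assms] by (auto intro: sum.cong)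

lemma alt_des_list_insert_between:
  assumes "xs \<noteq> []" "ys \<noteq> []" "distinct ys" "strict_antimono_on (set ys) f"
    and "last xs \<noteq> v" "f (hd ys) \<noteq> v" "(last xs < v) = (f (hd ys) < v)"
  shows "alt_des_list p (xs @ v # map f ys) =
    alt_des_list p xs + alt_des_list (p + length xs) ys + 2 * of_bool ((last xs < v) = even (p + length xs))"
proof -
  obtain y ys' where ys: "ys = y # ys'" using assms(2) by (cases ys) auto
  have "alt_des_list (p + length xs) (v # map f ys) =
      of_bool ((v > f y) = even (p + length xs)) + alt_des_list (p + length xs) ys"
    using ys alt_des_list_map_antimono[OF assms(4,3)] by (simp add: alt_des_list_Cons_Cons)
  then show ?thesis using assms ys
    by (auto simp: alt_des_list_append_Cons linorder_neq_iff)
qed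

definition order_reversal :: "'a::linorder set \<Rightarrow> 'a \<Rightarrow> 'a" where
  "order_reversal T a = the (map_of (zip (sorted_list_of_set T) (rev (sorted_list_of_set T))) a)"

lemma order_reversal_nth:
  assumes "finite T" "i < card T"
  shows "order_reversal T (sorted_list_of_set T ! i) = sorted_list_of_set T ! (card T - 1 - i)"
  using assms by (simp add: order_reversal_def map_of_zip_nth rev_nth)

lemma order_reversal:
  assumes "finite T"
  shows order_reversal_in: "a \<in> T \<Longrightarrow> order_reversal T a \<in> T"
    and order_reversal_involution: "a \<in> T \<Longrightarrow> order_reversal T (order_reversal T a) = a"
    and strict_antimono_order_reversal: "strict_antimono_on T (order_reversal T)"
proof -
  let ?s = "sorted_list_of_set T"
  have s: "length ?s = card T" "set ?s = T" "sorted_wrt (<) ?s" using assms by auto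
  have idx: "\<exists>i < card T. a = ?s ! i" if "a \<in> T" for a
    using that s by (metis in_set_conv_nth)
  show "order_reversal T a \<in> T" if "a \<in> T"
  proof -
    obtain i where "i < card T" "a = ?s ! i" using idx[OF \<open>a \<in> T\<close>] by blast
    then show ?thesis using s(1,2) nth_mem[of "card T - 1 - i" ?s] assms by (simp add: order_reversal_nth)
  qed
  show "order_reversal T (order_reversal T a) = a" if "a \<in> T"
    using idx[OF that] assms by (auto simp: order_reversal_nth)
  show "strict_antimono_on T (order_reversal T)"
  proof (rule monotone_onI)
    fix a b assume "a \<in> T" "b \<in> T" "a < b"
    then obtain i j where ij: "i < card T" "j < card T" "a = ?s ! i" "b = ?s ! j" using idx by blast
    have "i < j"
    proof (rule ccontr)
      assume "\<not> i < j"
      then have "b \<le> a" using ij s(1) sorted_nth_mono[of ?s j i] by simp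
      with \<open>a < b\<close> show False by simp
    qed
    then show "order_reversal T b < order_reversal T a"
      using ij s assms by (simp add: order_reversal_nth sorted_wrt_nth_less)
  qed
qed

text \<open>\<open>g = id\<close> gives the permutations of \<open>V\<close>, \<open>g = abs\<close> the signed permutations of \<open>{1..n}\<close>.\<close>

definition permutation_lifts :: "('a \<Rightarrow> 'b) \<Rightarrow> 'b set \<Rightarrow> 'a list set" where
  "permutation_lifts g V = {w. map g w \<in> permutations_of_set V}"

lemma permutation_lifts_iff:
  "w \<in> permutation_lifts g V \<longleftrightarrow> distinct (map g w) \<and> g ` set w = V"
  by (auto simp: permutation_lifts_def permutations_of_set_def)

lemma permutation_lifts_id [simp]: "permutation_lifts id V = permutations_of_set V"
  by (simp add: permutation_lifts_def)

lemma length_permutation_lifts: "w \<in> permutation_lifts g V \<Longrightarrow> length w = card V"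
  unfolding permutation_lifts_def using length_finite_permutations_of_set by fastforce

lemma distinct_permutation_lifts: "w \<in> permutation_lifts g V \<Longrightarrow> distinct w"
  by (simp add: permutation_lifts_iff distinct_map)

lemma finite_permutation_lifts:
  assumes "finite V" "\<And>b. finite (g -` {b})"
  shows "finite (permutation_lifts g V)"
proof (rule finite_subset)
  have "g -` V = (\<Union>b\<in>V. g -` {b})" by auto
  then have "finite (g -` V)" using assms by simp
  then show "finite {w. set w \<subseteq> g -` V \<and> length w \<le> card V}"
    by (rule finite_lists_length_le)
  show "permutation_lifts g V \<subseteq> {w. set w \<subseteq> g -` V \<and> length w \<le> card V}"
    by (auto simp: length_permutation_lifts permutation_lifts_iff)
qed

lemma permutation_lifts_insert:
  assumes "a \<notin> V" "finite V"
  shows "permutation_lifts g (insert a V) =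
    (\<lambda>(w, k, v). take k w @ v # drop k w) ` (SIGMA w:permutation_lifts g V. {..card V} \<times> g -` {a})"
    (is "?L = ?R")
proof
  show "?R \<subseteq> ?L"
  proof
    fix u assume "u \<in> ?R"
    then obtain w k v where w: "w \<in> permutation_lifts g V" and "a = g v" and u: "u = take k w @ v # drop k w"
      by auto
    let ?m = "map g w"
    have m: "distinct ?m" "set ?m = V" "a \<notin> set ?m" using w assms(1) by (auto simp: permutation_lifts_iff)
    have "map g (take k w @ v # drop k w) = take k ?m @ a # drop k ?m"
      using \<open>a = g v\<close> by (simp add: take_map drop_map)
    moreover have "distinct (take k ?m @ a # drop k ?m)"
      using m set_take_disj_set_drop_if_distinct[OF m(1) order.refl, of k]
      by (auto dest: in_set_takeD in_set_dropD)
    moreover have "set (take k ?m @ a # drop k ?m) = insert a V"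
      using m by (metis Un_insert_right append_take_drop_id list.set(2) set_append)
    ultimately show "u \<in> ?L"
      unfolding permutation_lifts_def u by auto
  qed
  show "?L \<subseteq> ?R"
  proof
    fix u assume u: "u \<in> ?L"
    then have "a \<in> g ` set u" by (simp add: permutation_lifts_iff)
    then obtain v where "v \<in> set u" "g v = a" by blast
    then obtain xs ys where u_eq: "u = xs @ v # ys" by (meson split_list)
    have du: "distinct (map g xs @ a # map g ys)" "set (map g xs @ a # map g ys) = insert a V"
      using u \<open>g v = a\<close> unfolding u_eq permutation_lifts_iff by auto
    then have "insert a (set (map g (xs @ ys))) = insert a V" by simp
    then have "set (map g (xs @ ys)) = V" using du(1) assms(1) by (subst (asm) insert_ident) auto
    with du(1) have "xs @ ys \<in> permutation_lifts g V" unfolding permutation_lifts_def by auto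
    moreover from this have "length xs \<le> card V" by (auto dest: length_permutation_lifts)
    ultimately show "u \<in> ?R"
      using u_eq \<open>g v = a\<close> by (intro rev_image_eqI[of "(xs @ ys, length xs, v)"]) auto
  qed
qed

lemma sum_permutation_lifts_insert:
  assumes "a \<notin> V" "finite V" "\<And>b. finite (g -` {b})"
  shows "(\<Sum>u\<in>permutation_lifts g (insert a V). f u) =
    (\<Sum>w\<in>permutation_lifts g V. \<Sum>k\<le>card V. \<Sum>v\<in>g -` {a}. f (take k w @ v # drop k w))"
proof -
  let ?ins = "\<lambda>(w, k, v). take k w @ v # drop k w"
  let ?S = "SIGMA w:permutation_lifts g V. {..card V} \<times> g -` {a}"
  have "inj_on ?ins ?S"
  proof (rule inj_onI)
    fix x y assume "x \<in> ?S" "y \<in> ?S" and eq0: "?ins x = ?ins y"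
    then obtain w k v w' k' v' where xy: "x = (w, k, v)" "y = (w', k', v')"
      and w: "w \<in> permutation_lifts g V" "k \<le> card V" "g v = a"
      and w': "w' \<in> permutation_lifts g V" "k' \<le> card V" "g v' = a"
      by (cases x, cases y) auto
    from eq0 have eq: "take k w @ v # drop k w = take k' w' @ v' # drop k' w'" unfolding xy by simp
    have avoid: "\<forall>b\<in>set (take j u). g b \<noteq> a" if "u \<in> permutation_lifts g V" for u j
    proof
      fix b assume "b \<in> set (take j u)"
      then have "g b \<in> g ` set u" by (auto dest: in_set_takeD)
      then show "g b \<noteq> a" using that assms(1) by (auto simp: permutation_lifts_iff)
    qed
    have "\<forall>b\<in>set (take k w). g b \<noteq> a" "\<forall>b\<in>set (take k' w'). g b \<noteq> a"
      using avoid w(1) w'(1) by blast+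
    then have take_eq: "take k w = take k' w'"
      using arg_cong[OF eq, of "takeWhile (\<lambda>b. g b \<noteq> a)"] w(3) w'(3) by (simp add: takeWhile_append2)
    moreover have "length (take k w) = k" "length (take k' w') = k'"
      using w(1,2) w'(1,2) by (simp_all add: length_permutation_lifts)
    ultimately have "k = k'" by metis
    moreover have "v = v'" "drop k w = drop k' w'" using eq take_eq by auto
    ultimately show "x = y" using take_eq xy by (metis append_take_drop_id)
  qed
  then have "(\<Sum>u\<in>permutation_lifts g (insert a V). f u) =
      (\<Sum>(w, k, v)\<in>(SIGMA w:permutation_lifts g V. {..card V} \<times> g -` {a}). f (take k w @ v # drop k w))"
    unfolding permutation_lifts_insert[OF assms(1,2)] by (simp add: sum.reindex case_prod_unfold)
  also have "\<dots> = (\<Sum>w\<in>permutation_lifts g V. \<Sum>(k, v)\<in>{..card V} \<times> g -` {a}. f (take k w @ v # drop k w))"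
    using finite_permutation_lifts[OF assms(2,3)] assms(3) by (subst sum.Sigma) auto
  also have "\<dots> = (\<Sum>w\<in>permutation_lifts g V. \<Sum>k\<le>card V. \<Sum>v\<in>g -` {a}. f (take k w @ v # drop k w))"
    using assms(3) by (simp add: sum.cartesian_product)
  finally show ?thesis .
qed

text \<open>
  Reversing the order of the letters after position \<open>k\<close> flips every descent there, which offsets
  the parity shift caused by inserting a letter at position \<open>k\<close> (\<open>alt_des_list_map_antimono\<close>).
\<close>

definition complement_suffix :: "nat \<Rightarrow> 'a::linorder list \<Rightarrow> 'a list" where
  "complement_suffix k w = take k w @ map (order_reversal (set (drop k w))) (drop k w)"

lemma map_order_reversal:
  assumes "distinct ys"
  shows set_map_order_reversal: "set (map (order_reversal (set ys)) ys) = set ys"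
    and distinct_map_order_reversal: "distinct (map (order_reversal (set ys)) ys)"
    and map_order_reversal_involution: "map (order_reversal (set ys)) (map (order_reversal (set ys)) ys) = ys"
proof -
  let ?r = "order_reversal (set ys)"
  have r: "?r a \<in> set ys" "?r (?r a) = a" if "a \<in> set ys" for a
    using that by (simp_all add: order_reversal_in order_reversal_involution)
  show "set (map ?r ys) = set ys" using r by (force simp: image_iff)
  show "distinct (map ?r ys)" using assms r by (simp add: distinct_map inj_on_def) metis
  show "map ?r (map ?r ys) = ys" using r by (simp add: map_idI)
qed

lemma
  assumes "w \<in> permutation_lifts g V"
  shows complement_suffix_in_permutation_lifts: "complement_suffix k w \<in> permutation_lifts g V"
    and complement_suffix_involution: "complement_suffix k (complement_suffix k w) = w"
proof -
  have d: "distinct w" using assms by (rule distinct_permutation_lifts)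
  then have dd: "distinct (drop k w)" by simp
  have set_eq: "set (complement_suffix k w) = set w"
    unfolding complement_suffix_def set_append set_map_order_reversal[OF dd]
    by (metis set_append append_take_drop_id)
  have "set (take k w) \<inter> set (drop k w) = {}" using d by (metis distinct_append append_take_drop_id)
  moreover have "order_reversal (set (drop k w)) ` set (drop k w) = set (drop k w)"
    using set_map_order_reversal[OF dd] by simp
  ultimately have "distinct (complement_suffix k w)"
    using d by (simp add: complement_suffix_def distinct_map_order_reversal[OF dd])
  with set_eq show "complement_suffix k w \<in> permutation_lifts g V"
    using assms by (simp add: permutation_lifts_iff distinct_map)
  show "complement_suffix k (complement_suffix k w) = w"
  proof (cases "k \<le> length w")
    case True
    let ?r = "order_reversal (set (drop k w))"
    have "take k (complement_suffix k w) = take k w" "drop k (complement_suffix k w) = map ?r (drop k w)"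
      using True by (simp_all add: complement_suffix_def)
    then show ?thesis
      unfolding complement_suffix_def[of k "complement_suffix k w"]
      by (simp only: set_map_order_reversal[OF dd] map_order_reversal_involution[OF dd] append_take_drop_id)
  qed (simp add: complement_suffix_def)
qed

lemma sum_permutation_lifts_complement_suffix:
  "(\<Sum>w\<in>permutation_lifts g V. f w) = (\<Sum>w\<in>permutation_lifts g V. f (complement_suffix k w))"
  by (rule sum.reindex_bij_witness[where i = "complement_suffix k" and j = "complement_suffix k"])
    (simp_all add: complement_suffix_in_permutation_lifts complement_suffix_involution)

lemma sum_permutation_lifts_alt_des_list_Suc:
  "(\<Sum>u\<in>permutation_lifts g V. f (alt_des_list (Suc p) u)) = (\<Sum>u\<in>permutation_lifts g V. f (alt_des_list p u))"
proof (subst sum_permutation_lifts_complement_suffix[where k = 0], rule sum.cong[OF refl])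
  fix u assume "u \<in> permutation_lifts g V"
  then have "distinct u" by (rule distinct_permutation_lifts)
  then show "f (alt_des_list (Suc p) (complement_suffix 0 u)) = f (alt_des_list p u)"
    using alt_des_list_map_antimono[OF strict_antimono_order_reversal, of u p]
    by (simp add: complement_suffix_def)
qed

lemma sum_permutation_lifts_insert_complement:
  assumes "a \<notin> V" "finite V" "\<And>b. finite (g -` {b})"
  shows "(\<Sum>u\<in>permutation_lifts g (insert a V). f u) =
    (\<Sum>w\<in>permutation_lifts g V. \<Sum>k\<le>card V. \<Sum>v\<in>g -` {a}.
       f (take k w @ v # map (order_reversal (set (drop k w))) (drop k w)))"
proof -
  let ?L = "permutation_lifts g V"
  have flip: "(\<Sum>w\<in>?L. F (take k w) (drop k w)) =
      (\<Sum>w\<in>?L. F (take k w) (map (order_reversal (set (drop k w))) (drop k w)))"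
    if "k \<le> card V" for F :: "_ \<Rightarrow> _ \<Rightarrow> 'c" and k
  proof (subst sum_permutation_lifts_complement_suffix[where k = k], rule sum.cong[OF refl])
    fix w assume "w \<in> ?L"
    then have "k \<le> length w" using that by (simp add: length_permutation_lifts)
    then show "F (take k (complement_suffix k w)) (drop k (complement_suffix k w)) =
        F (take k w) (map (order_reversal (set (drop k w))) (drop k w))"
      by (simp add: complement_suffix_def)
  qed
  have "(\<Sum>u\<in>permutation_lifts g (insert a V). f u) =
      (\<Sum>k\<le>card V. \<Sum>w\<in>?L. \<Sum>v\<in>g -` {a}. f (take k w @ v # drop k w))"
    unfolding sum_permutation_lifts_insert[OF assms] by (rule sum.swap)
  also have "\<dots> = (\<Sum>k\<le>card V. \<Sum>w\<in>?L. \<Sum>v\<in>g -` {a}.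
      f (take k w @ v # map (order_reversal (set (drop k w))) (drop k w)))"
    using flip[of _ "\<lambda>xs ys. \<Sum>v\<in>g -` {a}. f (xs @ v # ys)"] by simp
  also have "\<dots> = (\<Sum>w\<in>?L. \<Sum>k\<le>card V. \<Sum>v\<in>g -` {a}.
      f (take k w @ v # map (order_reversal (set (drop k w))) (drop k w)))"
    by (rule sum.swap)
  finally show ?thesis .
qed

abbreviation X :: "real poly" where "X \<equiv> [:0, 1:]"

lemma pderiv_X_power: "pderiv (X ^ n) = smult (of_nat n) (X ^ (n - 1))"
  by (simp add: pderiv_power pderiv_pCons)

lemma sum_X_power_diff_indicator:
  assumes "finite I" "\<forall>j\<in>I. f j \<le> 1"
  shows "(\<Sum>j\<in>I. X ^ (sum f I - f j)) = (1 - X) * pderiv (X ^ sum f I) + smult (card I) (X ^ sum f I)"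
proof -
  define D where "D = sum f I"
  let ?I1 = "{j\<in>I. f j = 1}" and ?I0 = "{j\<in>I. f j = 0}"
  have I: "I = ?I1 \<union> ?I0" "?I1 \<inter> ?I0 = {}" "finite ?I1" "finite ?I0" using assms by auto
  have "D = sum f ?I1 + sum f ?I0" unfolding D_def by (subst I(1)) (rule sum.union_disjoint[OF I(3,4,2)])
  then have card1: "card ?I1 = D" by simp
  have card0: "card ?I0 = card I - D"
    using card_Un_disjoint[OF I(3,4,2)] I(1) card1 by simp
  have "(\<Sum>j\<in>I. X ^ (D - f j)) = (\<Sum>j\<in>?I1. X ^ (D - f j)) + (\<Sum>j\<in>?I0. X ^ (D - f j))"
    by (subst I(1)) (rule sum.union_disjoint[OF I(3,4,2)])
  also have "\<dots> = smult (of_nat D) (X ^ (D - 1)) + smult (of_nat (card I - D)) (X ^ D)"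
    using card1 card0 by (simp add: of_nat_mult_conv_smult)
  also have "\<dots> = (1 - X) * pderiv (X ^ D) + smult (card I) (X ^ D)"
  proof (cases D)
    case (Suc d)
    have "D \<le> card I" using card1 I(1) I(3) assms(1) card_mono by fastforce
    then have "real (card I - D) = real (card I) - real D" by (rule of_nat_diff)
    moreover have "D - 1 = d" "X ^ D = X * X ^ d" using Suc by simp_all
    moreover have "pderiv (X ^ D) = smult (of_nat D) (X ^ d)"
      using pderiv_X_power[of D] \<open>D - 1 = d\<close> by (simp only:)
    moreover have "smult a q + smult (b - a) (X * q) = (1 - X) * smult a q + smult b (X * q)" for a b q
      by (simp add: algebra_simps smult_diff_left del: mult_pCons_left)
    ultimately show ?thesis by (simp only:)
  qed simp
  finally show ?thesis unfolding D_def .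
qed

definition hoffman_conj :: "nat \<Rightarrow> real poly \<Rightarrow> real poly" where
  "hoffman_conj k r = [:1, 0, 1:] * ((1 - X) * pderiv r + smult (of_nat k) r)"

lemma hoffman_conj_add: "hoffman_conj k (p + q) = hoffman_conj k p + hoffman_conj k q"
  unfolding hoffman_conj_def pderiv_add smult_add_right by (simp only: ring_distribs add_ac)

lemma hoffman_conj_sum: "hoffman_conj k (\<Sum>i\<in>A. f i) = (\<Sum>i\<in>A. hoffman_conj k (f i))"
  by (induction A rule: infinite_finite_induct) (simp_all add: hoffman_conj_add hoffman_conj_def[of k 0])

lemma hoffman_conj_smult: "hoffman_conj k (smult c p) = smult c (hoffman_conj k p)"
  by (rule poly_ext) (simp add: hoffman_conj_def pderiv_smult algebra_simps)

lemma hoffman_conj_mult_one_plus_X_squared: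
  "hoffman_conj (Suc (Suc m)) ([:1, 0, 1:] * p) = [:1, 0, 1:] * ([:2, 2:] * p + hoffman_conj m p)"
  unfolding hoffman_conj_def pderiv_mult by (rule poly_ext) (simp add: pderiv_pCons algebra_simps)

lemma sum_alt_des_at_eq_hoffman_conj:
  assumes "length xs = Suc n"
  shows "[:1, 0, 1:] * (\<Sum>j<n. X ^ (alt_des_list p xs - alt_des_at p xs j)) = hoffman_conj n (X ^ alt_des_list p xs)"
  using sum_X_power_diff_indicator[of "{..<n}" "alt_des_at p xs"] assms
  by (simp add: hoffman_conj_def alt_des_list_def alt_des_at_def)

lemma poly_hoffman_conj:
  assumes r: "\<And>y. y \<noteq> 1 \<Longrightarrow> poly r y = (1 - y) ^ k * poly s ((1 + y) / (1 - y))" and x: "x \<noteq> 1"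
  shows "poly (hoffman_conj k r) x = (1 - x) ^ (k + 1) * poly ([:1, 0, 1:] * pderiv s) ((1 + x) / (1 - x))"
proof -
  define u where "u = (1 + x) / (1 - x)"
  have t: "1 - x \<noteq> 0" using x by simp
  define D where "D = - (of_nat k * (1 - x) ^ (k - 1)) * poly s u + (1 - x) ^ k * (2 / (1 - x)\<^sup>2 * poly (pderiv s) u)"
  have "((\<lambda>y. (1 - y) ^ k * poly s ((1 + y) / (1 - y))) has_real_derivative D) (at x)"
    unfolding D_def u_def using t
    by (auto intro!: derivative_eq_intros simp: power2_eq_square field_simps)
  then have "(poly r has_real_derivative D) (at x)"
    by (rule has_field_derivative_transform_within_open[where S = "- {1}"]) (use x r in auto)
  then have r': "poly (pderiv r) x = D" using poly_DERIV DERIV_unique by blast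
  have "(1 - x) * (of_nat k * (1 - x) ^ (k - 1)) = of_nat k * (1 - x) ^ k" by (cases k) simp_all
  moreover have "t * c = l * e \<Longrightarrow> t * (- c * P + e * W) + l * (e * P) = t * e * W" for t c l e P W :: real
    by algebra
  ultimately have deriv_comb: "(1 - x) * D + of_nat k * poly r x = (1 - x) * (1 - x) ^ k * (2 / (1 - x)\<^sup>2 * poly (pderiv s) u)"
    unfolding r' D_def r[OF x] u_def[symmetric] by blast
  have "poly (hoffman_conj k r) x = (1 + x\<^sup>2) * ((1 - x) * D + of_nat k * poly r x)"
    by (simp add: hoffman_conj_def r' power2_eq_square algebra_simps)
  also have "\<dots> = (1 - x) ^ (k + 1) * ((1 + x\<^sup>2) * (2 / (1 - x)\<^sup>2)) * poly (pderiv s) u"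
    unfolding deriv_comb by (simp add: ac_simps)
  also have "(1 + x\<^sup>2) * (2 / (1 - x)\<^sup>2) = 1 + u\<^sup>2"
    using t by (simp add: u_def power_divide divide_simps) (simp add: power2_eq_square algebra_simps)
  finally show ?thesis unfolding u_def[symmetric] by (simp add: power2_eq_square algebra_simps)
qed

lemma alt_des_list_insert_max:
  fixes \<sigma> :: "'a::linorder list"
  assumes "distinct \<sigma>" "\<sigma> \<noteq> []" "\<forall>a\<in>set \<sigma>. a < N" "k \<le> length \<sigma>"
  shows "alt_des_list p (take k \<sigma> @ N # map (order_reversal (set (drop k \<sigma>))) (drop k \<sigma>)) =
    (if k = 0 then alt_des_list p \<sigma> + of_bool (even p)
     else if k = length \<sigma> then alt_des_list p \<sigma> + of_bool (even (p + length \<sigma>))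
     else alt_des_list p (take k \<sigma>) + alt_des_list (p + k) (drop k \<sigma>) + 2 * of_bool (even (p + k)))"
proof -
  let ?r = "order_reversal (set (drop k \<sigma>))"
  have anti: "strict_antimono_on (set (drop k \<sigma>)) ?r" by (simp add: strict_antimono_order_reversal)
  have dd: "distinct (drop k \<sigma>)" using assms(1) by simp
  have r_in: "?r a \<in> set (drop k \<sigma>)" if "a \<in> set (drop k \<sigma>)" for a
    using that by (simp add: order_reversal_in)
  consider "k = 0" | "k = length \<sigma>" | "0 < k" "k < length \<sigma>" using assms(4) by linarith
  then show ?thesis
  proof cases
    case 1
    then obtain y ys where "\<sigma> = y # ys" using assms(2) by (cases \<sigma>) auto
    moreover have "?r y < N" using r_in[of y] assms(3) 1 \<open>\<sigma> = y # ys\<close> by (auto dest: in_set_dropD)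
    ultimately show ?thesis
      using 1 alt_des_list_map_antimono[OF anti dd, of p] by (simp add: alt_des_list_Cons_Cons)
  next
    case 2
    have "\<not> N < last \<sigma>" using assms(2,3) by (simp add: not_less_iff_gr_or_eq)
    then show ?thesis
      using 2 assms(2) alt_des_list_append_Cons[of \<sigma> p N "[]"] by simp
  next
    case 3
    have "take k \<sigma> \<noteq> []" "drop k \<sigma> \<noteq> []" using 3 by (cases \<sigma>, auto)
    moreover have "last (take k \<sigma>) < N" using \<open>take k \<sigma> \<noteq> []\<close> assms(3)
      by (meson in_set_takeD last_in_set)
    moreover have "?r (hd (drop k \<sigma>)) < N"
      using r_in[OF hd_in_set[OF \<open>drop k \<sigma> \<noteq> []\<close>]] assms(3) by (auto dest: in_set_dropD)
    ultimately show ?thesis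
      using 3 alt_des_list_insert_between[OF _ _ dd anti, of "take k \<sigma>" N p] by simp
  qed
qed

lemma alt_des_list_insert_max_complement:
  fixes \<sigma> :: "'a::linorder list"
  assumes "distinct \<sigma>" "\<sigma> \<noteq> []" "\<forall>a\<in>set \<sigma>. a < N" "k \<le> length \<sigma>"
  defines "\<tau> \<equiv> map (order_reversal (set \<sigma>)) \<sigma>"
  shows "alt_des_list (Suc p) (take k \<tau> @ N # map (order_reversal (set (drop k \<tau>))) (drop k \<tau>)) =
    (if k = 0 then alt_des_list p \<sigma> + of_bool (odd p)
     else if k = length \<sigma> then alt_des_list p \<sigma> + of_bool (odd (p + length \<sigma>))
     else alt_des_list p (take k \<sigma>) + alt_des_list (p + k) (drop k \<sigma>) + 2 * of_bool (odd (p + k)))"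
proof -
  let ?r = "order_reversal (set \<sigma>)"
  have ad: "alt_des_list (Suc q) (map ?r xs) = alt_des_list q xs" if "set xs \<subseteq> set \<sigma>" "distinct xs" for q xs
    by (rule alt_des_list_map_antimono[OF monotone_on_subset[OF strict_antimono_order_reversal[OF finite_set] that(1)] that(2)])
  have "set \<tau> = set \<sigma>" unfolding \<tau>_def by (rule set_map_order_reversal[OF assms(1)])
  moreover have "distinct \<tau>" "length \<tau> = length \<sigma>"
    using assms(1) by (simp_all add: \<tau>_def distinct_map_order_reversal)
  ultimately have "distinct \<tau>" "\<tau> \<noteq> []" "\<forall>a\<in>set \<tau>. a < N" "k \<le> length \<tau>" "length \<tau> = length \<sigma>"
    using assms(2-4) by auto
  moreover have "take k \<tau> = map ?r (take k \<sigma>)" "drop k \<tau> = map ?r (drop k \<sigma>)"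
    by (simp_all add: \<tau>_def take_map drop_map)
  ultimately show ?thesis
    using alt_des_list_insert_max[of \<tau> N k "Suc p"] assms(1)
      ad[of \<sigma>] ad[OF set_take_subset, of k] ad[OF set_drop_subset, of k]
    by (simp add: \<tau>_def)
qed

lemma X_power_pairs:
  "X ^ c + X ^ (c + 2) = [:1, 0, 1:] * X ^ c" "X ^ (c + 2) + X ^ c = [:1, 0, 1:] * X ^ c"
  "X ^ c + X ^ Suc c = [:1, 1:] * X ^ c" "X ^ Suc c + X ^ c = [:1, 1:] * X ^ c"
  by (simp_all add: power_add algebra_simps numeral_2_eq_2 del: mult_pCons_left, simp_all add: one_pCons)

lemma sum_insert_max_both_parities:
  fixes \<sigma> :: "'a::linorder list"
  assumes "distinct \<sigma>" "length \<sigma> = Suc m" "\<forall>a\<in>set \<sigma>. a < N"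
  defines "ins \<tau> k \<equiv> take k \<tau> @ N # map (order_reversal (set (drop k \<tau>))) (drop k \<tau>)"
    and "\<tau> \<equiv> map (order_reversal (set \<sigma>)) \<sigma>"
  shows "(\<Sum>k\<le>Suc m. X ^ alt_des_list 0 (ins \<sigma> k) + X ^ alt_des_list 1 (ins \<tau> k)) =
    [:2, 2:] * X ^ alt_des_list 0 \<sigma> + hoffman_conj m (X ^ alt_des_list 0 \<sigma>)"
proof -
  define a where "a = alt_des_list 0 \<sigma>"
  define g where "g k = X ^ alt_des_list 0 (ins \<sigma> k) + X ^ alt_des_list 1 (ins \<tau> k)" for k
  have \<sigma>_ne: "\<sigma> \<noteq> []" using assms(2) by auto
  note plain = alt_des_list_insert_max[OF assms(1) \<sigma>_ne assms(3), of _ 0, folded ins_def]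
  note complemented = alt_des_list_insert_max_complement[OF assms(1) \<sigma>_ne assms(3), of _ 0,
      folded \<tau>_def ins_def, simplified]
  have "g 0 = [:1, 1:] * X ^ a" "g (Suc m) = [:1, 1:] * X ^ a"
    using plain[of 0] complemented[of 0] plain[of "Suc m"] complemented[of "Suc m"]
    by (simp_all add: g_def a_def assms(2) X_power_pairs)
  moreover have "g (Suc j) = [:1, 0, 1:] * X ^ (a - alt_des_at 0 \<sigma> j)" if "j < m" for j
  proof -
    have "a = alt_des_list 0 (take (Suc j) \<sigma>) + alt_des_list (Suc j) (drop (Suc j) \<sigma>) + alt_des_at 0 \<sigma> j"
      using alt_des_list_split[of "Suc j" \<sigma> 0] that assms(2) by (simp add: a_def)
    then show ?thesis using plain[of "Suc j"] complemented[of "Suc j"] that assms(2)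
      by (cases "even j") (simp_all add: g_def X_power_pairs)
  qed
  then have "(\<Sum>j<m. g (Suc j)) = hoffman_conj m (X ^ a)"
    using sum_alt_des_at_eq_hoffman_conj[OF assms(2), of 0]
    by (simp add: a_def sum_distrib_left del: mult_pCons_left)
  moreover have "(\<Sum>k\<le>Suc m. g k) = g 0 + (\<Sum>j<m. g (Suc j)) + g (Suc m)"
    by (simp add: sum.atMost_shift)
  moreover have "[:1, 1:] * q + [:1, 1:] * q = [:2, 2:] * q" for q :: "real poly"
    by (simp only: distrib_right[symmetric]) (simp add: numeral_mult_conv_smult)
  ultimately show ?thesis unfolding g_def a_def by (simp add: algebra_simps del: mult_pCons_left)
qed

lemma alt_des_list_insert_extreme:
  fixes w :: "'a::linorder list"
  assumes "distinct w" "j < length w" "\<forall>a\<in>set (z # w). lo < a \<and> a < hi" "v = hi \<or> v = lo"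
  shows "alt_des_list p (z # take j w @ v # map (order_reversal (set (drop j w))) (drop j w)) =
    alt_des_list p (z # take j w) + alt_des_list (p + Suc j) (drop j w) + 2 * of_bool ((v = hi) = even (p + Suc j))"
proof -
  let ?xs = "z # take j w" and ?ys = "drop j w"
  let ?r = "order_reversal (set ?ys)"
  have ys: "?ys \<noteq> []" "distinct ?ys" using assms(1,2) by auto
  have l: "lo < last ?xs" "last ?xs < hi"
    using assms(3) last_in_set[of ?xs] by (auto dest: in_set_takeD)
  have r: "lo < ?r (hd ?ys)" "?r (hd ?ys) < hi"
    using assms(3) order_reversal_in[of "set ?ys" "hd ?ys"] hd_in_set[OF ys(1)]
    by (auto dest: in_set_dropD)
  have "alt_des_list p (?xs @ v # map ?r ?ys) =
      alt_des_list p ?xs + alt_des_list (p + length ?xs) ?ys + 2 * of_bool ((last ?xs < v) = even (p + length ?xs))"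
    by (rule alt_des_list_insert_between[OF list.simps(3) ys strict_antimono_order_reversal])
      (use l r assms(4) in \<open>auto simp del: last.simps\<close>)
  moreover have "(last ?xs < v) = (v = hi)" using l assms(4) by (auto simp del: last.simps)
  moreover have "length ?xs = Suc j" using assms(2) by simp
  ultimately show ?thesis by (simp only: append_Cons)
qed

lemma sum_insert_extremes:
  fixes w :: "'a::linorder list"
  assumes "distinct w" "length w = n" "\<forall>a\<in>set (z # w). lo < a \<and> a < hi"
  defines "ins v k \<equiv> z # take k w @ v # map (order_reversal (set (drop k w))) (drop k w)"
  shows "(\<Sum>k\<le>n. X ^ alt_des_list p (ins hi k) + X ^ alt_des_list p (ins lo k)) =
    [:1, 1:] * X ^ alt_des_list p (z # w) + hoffman_conj n (X ^ alt_des_list p (z # w))"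
proof -
  define D where "D = alt_des_list p (z # w)"
  define g where "g k = X ^ alt_des_list p (ins hi k) + X ^ alt_des_list p (ins lo k)" for k
  have "lo \<noteq> hi" using assms(3) by force
  have "\<not> hi < last (z # w)" "lo < last (z # w)"
    using assms(3) last_in_set[of "z # w"] by (auto simp del: last.simps)
  then have "alt_des_list p (ins hi n) = D + of_bool (even (p + Suc n))"
    "alt_des_list p (ins lo n) = D + of_bool (odd (p + Suc n))"
    using alt_des_list_append_Cons[of "z # w" p hi "[]"] alt_des_list_append_Cons[of "z # w" p lo "[]"]
    by (simp_all add: ins_def D_def assms(2) del: last.simps)
  then have "g n = [:1, 1:] * X ^ D"
    by (cases "even (p + Suc n)") (simp_all add: g_def X_power_pairs)
  moreover have "g j = [:1, 0, 1:] * X ^ (D - alt_des_at p (z # w) j)" if "j < n" for j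
  proof -
    have "D = alt_des_list p (z # take j w) + alt_des_list (p + Suc j) (drop j w) + alt_des_at p (z # w) j"
      using alt_des_list_split[of "Suc j" "z # w" p] that assms(2) by (simp add: D_def)
    then show ?thesis
      using alt_des_list_insert_extreme[OF assms(1) _ assms(3), of j _ p] that assms(2) \<open>lo \<noteq> hi\<close>
      by (cases "even (p + Suc j)") (simp_all add: g_def ins_def X_power_pairs)
  qed
  then have "(\<Sum>j<n. g j) = hoffman_conj n (X ^ D)"
    using sum_alt_des_at_eq_hoffman_conj[of "z # w" n p] assms(2)
    by (simp add: D_def sum_distrib_left del: mult_pCons_left)
  ultimately have "(\<Sum>k\<le>n. g k) = [:1, 1:] * X ^ D + hoffman_conj n (X ^ D)"
    by (simp add: lessThan_Suc_atMost[symmetric])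
  then show ?thesis unfolding g_def D_def .
qed

definition alt_des_poly :: "nat \<Rightarrow> real poly" where
  "alt_des_poly n = (\<Sum>w\<in>permutations_of_set {1..n}. X ^ alt_des_list 0 w)"

definition signed_words :: "nat \<Rightarrow> int list set" where
  "signed_words n = permutation_lifts abs {1..int n}"

definition signed_alt_des_poly :: "nat \<Rightarrow> real poly" where
  "signed_alt_des_poly n = (\<Sum>w\<in>signed_words n. X ^ alt_des_list 1 (0 # w))"

text \<open>
  Each parity alone sums to \<open>alt_des_poly\<close> (\<open>sum_permutation_lifts_alt_des_list_Suc\<close>), but
  only their sum splits into contributions of the shorter permutations.
\<close>

lemma alt_des_poly_Suc_Suc:
  "smult 2 (alt_des_poly (Suc (Suc m))) =
    [:2, 2:] * alt_des_poly (Suc m) + hoffman_conj m (alt_des_poly (Suc m))"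
proof -
  let ?P = "\<lambda>n. permutations_of_set {1..n}"
  let ?N = "Suc (Suc m)"
  let ?ins = "\<lambda>\<tau> k. take k \<tau> @ ?N # map (order_reversal (set (drop k \<tau>))) (drop k \<tau>)"
  have P_Suc: "?P ?N = permutation_lifts id (insert ?N {1..Suc m})"
    by (simp add: atLeastAtMostSuc_conv)
  have insert_sum: "(\<Sum>u\<in>?P ?N. f u) = (\<Sum>\<sigma>\<in>?P (Suc m). \<Sum>k\<le>Suc m. f (?ins \<sigma> k))" for f :: "nat list \<Rightarrow> real poly"
    unfolding P_Suc by (subst sum_permutation_lifts_insert_complement) simp_all
  have complement_sum: "(\<Sum>\<sigma>\<in>?P n. f \<sigma>) = (\<Sum>\<sigma>\<in>?P n. f (complement_suffix 0 \<sigma>))" for f :: "nat list \<Rightarrow> real poly" and n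
    using sum_permutation_lifts_complement_suffix[of f id "{1..n}" 0] by simp
  have "smult 2 (alt_des_poly ?N) = (\<Sum>u\<in>?P ?N. X ^ alt_des_list 0 u) + (\<Sum>u\<in>?P ?N. X ^ alt_des_list 1 u)"
    using sum_permutation_lifts_alt_des_list_Suc[where f = "\<lambda>d. X ^ d" and g = id and V = "{1..?N}" and p = 0]
    by (simp add: alt_des_poly_def numeral_mult_conv_smult)
  also have "\<dots> = (\<Sum>\<sigma>\<in>?P (Suc m). \<Sum>k\<le>Suc m. X ^ alt_des_list 0 (?ins \<sigma> k)
      + X ^ alt_des_list 1 (?ins (complement_suffix 0 \<sigma>) k))"
    unfolding insert_sum complement_sum[of "\<lambda>\<sigma>. \<Sum>k\<le>Suc m. X ^ alt_des_list 1 (?ins \<sigma> k)"]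
    by (simp only: sum.distrib)
  also have "\<dots> = (\<Sum>\<sigma>\<in>?P (Suc m). [:2, 2:] * X ^ alt_des_list 0 \<sigma> + hoffman_conj m (X ^ alt_des_list 0 \<sigma>))"
  proof (rule sum.cong[OF refl])
    fix \<sigma> assume \<sigma>: "\<sigma> \<in> ?P (Suc m)"
    have \<sigma>_props: "distinct \<sigma>" "length \<sigma> = Suc m" "\<forall>a\<in>set \<sigma>. a < ?N"
      using \<sigma> length_finite_permutations_of_set[OF \<sigma>] by (auto simp: permutations_of_set_def)
    have "complement_suffix 0 \<sigma> = map (order_reversal (set \<sigma>)) \<sigma>"
      by (simp add: complement_suffix_def)
    then show "(\<Sum>k\<le>Suc m. X ^ alt_des_list 0 (?ins \<sigma> k) + X ^ alt_des_list 1 (?ins (complement_suffix 0 \<sigma>) k)) =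
        [:2, 2:] * X ^ alt_des_list 0 \<sigma> + hoffman_conj m (X ^ alt_des_list 0 \<sigma>)"
      using sum_insert_max_both_parities[OF \<sigma>_props] by (simp only:)
  qed
  also have "\<dots> = [:2, 2:] * alt_des_poly (Suc m) + hoffman_conj m (alt_des_poly (Suc m))"
    by (simp add: alt_des_poly_def sum.distrib sum_distrib_left hoffman_conj_sum del: mult_pCons_left)
  finally show ?thesis .
qed

lemma signed_words_bound: "w \<in> signed_words n \<Longrightarrow> a \<in> set w \<Longrightarrow> 1 \<le> \<bar>a\<bar> \<and> \<bar>a\<bar> \<le> int n"
  by (auto simp: signed_words_def permutation_lifts_iff)

lemma signed_alt_des_poly_Suc:
  "signed_alt_des_poly (Suc n) = [:1, 1:] * signed_alt_des_poly n + hoffman_conj n (signed_alt_des_poly n)"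
proof -
  let ?N = "int (Suc n)"
  have fin: "finite (abs -` {b})" for b :: int
    by (rule finite_subset[of _ "{b, - b}"]) auto
  have vimage: "abs -` {?N} = {?N, - ?N}" by auto
  have "signed_alt_des_poly (Suc n) =
      (\<Sum>u\<in>permutation_lifts abs (insert ?N {1..int n}). X ^ alt_des_list 1 (0 # u))"
    by (simp add: signed_alt_des_poly_def signed_words_def atLeastAtMostPlus1_int_conv)
  also have "\<dots> = (\<Sum>w\<in>signed_words n. \<Sum>k\<le>card {1..int n}. \<Sum>v\<in>abs -` {?N}.
      X ^ alt_des_list 1 (0 # take k w @ v # map (order_reversal (set (drop k w))) (drop k w)))"
    unfolding signed_words_def by (rule sum_permutation_lifts_insert_complement[OF _ _ fin]) auto
  also have "\<dots> = (\<Sum>w\<in>signed_words n. \<Sum>k\<le>n. \<Sum>v\<in>{?N, - ?N}.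
      X ^ alt_des_list 1 (0 # take k w @ v # map (order_reversal (set (drop k w))) (drop k w)))"
    unfolding vimage by simp
  also have "\<dots> = (\<Sum>w\<in>signed_words n. [:1, 1:] * X ^ alt_des_list 1 (0 # w) + hoffman_conj n (X ^ alt_des_list 1 (0 # w)))"
  proof (rule sum.cong[OF refl])
    fix w assume w: "w \<in> signed_words n"
    have "distinct w" "length w = n"
      using w by (simp_all add: signed_words_def distinct_permutation_lifts length_permutation_lifts)
    moreover have "\<forall>a\<in>set (0 # w). - ?N < a \<and> a < ?N"
      using signed_words_bound[OF w] by (force simp: abs_le_iff)
    ultimately have "(\<Sum>k\<le>n. X ^ alt_des_list 1 (0 # take k w @ ?N # map (order_reversal (set (drop k w))) (drop k w))
        + X ^ alt_des_list 1 (0 # take k w @ - ?N # map (order_reversal (set (drop k w))) (drop k w))) =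
        [:1, 1:] * X ^ alt_des_list 1 (0 # w) + hoffman_conj n (X ^ alt_des_list 1 (0 # w))"
      by (rule sum_insert_extremes)
    then show "(\<Sum>k\<le>n. \<Sum>v\<in>{?N, - ?N}.
        X ^ alt_des_list 1 (0 # take k w @ v # map (order_reversal (set (drop k w))) (drop k w))) =
        [:1, 1:] * X ^ alt_des_list 1 (0 # w) + hoffman_conj n (X ^ alt_des_list 1 (0 # w))"
      by simp
  qed
  also have "\<dots> = [:1, 1:] * signed_alt_des_poly n + hoffman_conj n (signed_alt_des_poly n)"
    by (simp add: signed_alt_des_poly_def sum.distrib sum_distrib_left hoffman_conj_sum del: mult_pCons_left)
  finally show ?thesis .
qed

lemma signed_alt_des_poly_hoffman:
  "x \<noteq> 1 \<Longrightarrow> poly (signed_alt_des_poly n) x = (1 - x) ^ n * poly (Q_hoff n) ((1 + x) / (1 - x))"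
proof (induction n arbitrary: x)
  case 0
  have "signed_words 0 = {[]}" by (auto simp: signed_words_def permutation_lifts_iff)
  then show ?case by (simp add: signed_alt_des_poly_def)
next
  case (Suc n)
  define u where "u = (1 + x) / (1 - x)"
  have "poly (signed_alt_des_poly (Suc n)) x =
      (1 + x) * poly (signed_alt_des_poly n) x + poly (hoffman_conj n (signed_alt_des_poly n)) x"
    by (simp add: signed_alt_des_poly_Suc algebra_simps)
  also have "\<dots> = (1 + x) * ((1 - x) ^ n * poly (Q_hoff n) u)
      + (1 - x) ^ (n + 1) * poly ([:1, 0, 1:] * pderiv (Q_hoff n)) u"
    using Suc.IH Suc.prems poly_hoffman_conj[OF Suc.IH Suc.prems] by (simp add: u_def)
  also have "1 + x = (1 - x) * u" using Suc.prems by (simp add: u_def)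
  finally show ?case by (simp add: u_def[symmetric] algebra_simps)
qed

lemma alt_des_poly_hoffman:
  assumes "n \<ge> 1" "x \<noteq> 1"
  shows "2 ^ n * (1 + x\<^sup>2) * poly (alt_des_poly n) x = (1 - x) ^ (n + 1) * poly (P_hoff n) ((1 + x) / (1 - x))"
proof -
  define r where "r n = smult (2 ^ n) ([:1, 0, 1:] * alt_des_poly n)" for n
  have r_poly: "poly (r n) y = 2 ^ n * (1 + y\<^sup>2) * poly (alt_des_poly n) y" for n y
    by (simp add: r_def power2_eq_square algebra_simps)
  have "poly (r (Suc m)) y = (1 - y) ^ (Suc m + 1) * poly (P_hoff (Suc m)) ((1 + y) / (1 - y))"
    if "y \<noteq> 1" for m y
    using that
  proof (induction m arbitrary: y)
    case 0
    have "permutations_of_set {1..Suc 0} = {[1]}" by simp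
    then have "poly (r 1) y = 2 * (1 + y\<^sup>2)" by (simp add: r_poly alt_des_poly_def)
    also have "\<dots> = (1 - y) ^ 2 * (1 + ((1 + y) / (1 - y))\<^sup>2)"
      using 0 by (simp add: power_divide divide_simps) (simp add: power2_eq_square algebra_simps)
    finally show ?case by (simp add: pderiv_pCons power2_eq_square)
  next
    case (Suc m)
    have "r (Suc (Suc m)) = smult (2 ^ Suc m) ([:1, 0, 1:] * smult 2 (alt_des_poly (Suc (Suc m))))"
      by (simp add: r_def)
    also have "\<dots> = hoffman_conj (Suc (Suc m)) (r (Suc m))"
      by (simp only: alt_des_poly_Suc_Suc r_def hoffman_conj_smult hoffman_conj_mult_one_plus_X_squared)
    finally show ?case
      using poly_hoffman_conj[of "r (Suc m)" "Suc (Suc m)" "P_hoff (Suc m)" y] Suc by simp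
  qed
  then show ?thesis using assms r_poly by (metis One_nat_def Suc_pred' less_eq_Suc_le)
qed

lemma alt_des_list_map_upt:
  "alt_des_list p (map f [0..<Suc m]) = card {j. j < m \<and> (f j > f (Suc j)) = even (p + j)}"
proof -
  have "alt_des_list p (map f [0..<Suc m]) = (\<Sum>j<m. of_bool ((f j > f (Suc j)) = even (p + j)))"
    unfolding alt_des_list_def alt_des_at_def by (intro sum.cong) (auto simp del: upt_Suc)
  also have "\<dots> = card {j. j < m \<and> (f j > f (Suc j)) = even (p + j)}"
    by (simp add: lessThan_def Collect_conj_eq)
  finally show ?thesis .
qed

lemma Collect_atLeastLessThan_Suc: "{i \<in> {1..<Suc m}. P i} = Suc ` {j. j < m \<and> P (Suc j)}"
  by (auto simp: image_iff gr0_conv_Suc Suc_le_eq)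

lemma alt_des_eq_alt_des_list:
  assumes "inj \<sigma>"
  shows "alt_des n \<sigma> = alt_des_list 0 (map \<sigma> [1..<Suc n])"
proof (cases n)
  case (Suc m)
  have list_eq: "map \<sigma> [1..<Suc n] = map (\<lambda>j. \<sigma> (Suc j)) [0..<Suc m]"
    unfolding Suc by (simp add: map_Suc_upt[symmetric] del: upt_Suc)
  have "\<sigma> i \<noteq> \<sigma> (Suc i)" for i using assms by (simp add: inj_eq)
  then have "{i \<in> {1..<n}. (\<sigma> i > \<sigma> (Suc i) \<and> odd i) \<or> (\<sigma> i < \<sigma> (Suc i) \<and> even i)} =
      {i \<in> {1..<Suc m}. (\<sigma> i > \<sigma> (Suc i)) = odd i}"
    unfolding Suc by (intro Collect_cong conj_cong refl) (auto simp: linorder_neq_iff)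
  also have "\<dots> = Suc ` {j. j < m \<and> (\<sigma> (Suc j) > \<sigma> (Suc (Suc j))) = odd (Suc j)}"
    by (rule Collect_atLeastLessThan_Suc)
  also have "{j. j < m \<and> (\<sigma> (Suc j) > \<sigma> (Suc (Suc j))) = odd (Suc j)} =
      {j. j < m \<and> (\<sigma> (Suc j) > \<sigma> (Suc (Suc j))) = even j}"
    by simp
  finally have "alt_des n \<sigma> = card (Suc ` {j. j < m \<and> (\<sigma> (Suc j) > \<sigma> (Suc (Suc j))) = even j})"
    by (simp add: alt_des_def)
  then show ?thesis unfolding list_eq alt_des_list_map_upt by (simp add: card_image)
qed (simp add: alt_des_def)

lemma A_hat_eq_poly: "A_hat n x = poly (alt_des_poly n) x"
proof -
  let ?S = "{\<sigma>. \<sigma> permutes {1..n}}" and ?T = "permutations_of_set {1..n}"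
  let ?word = "\<lambda>\<sigma>. map \<sigma> [1..<Suc n]"
  have inj: "inj_on ?word ?S"
  proof (rule inj_onI)
    fix \<sigma> \<tau> assume "\<sigma> \<in> ?S" "\<tau> \<in> ?S" "?word \<sigma> = ?word \<tau>"
    then have "\<sigma> i = \<tau> i" for i
      by (cases "i \<in> {1..n}") (auto simp: map_eq_conv permutes_not_in simp del: upt_Suc)
    then show "\<sigma> = \<tau>" by blast
  qed
  have "?word ` ?S \<subseteq> ?T"
  proof
    fix w assume "w \<in> ?word ` ?S"
    then obtain \<sigma> where \<sigma>: "\<sigma> permutes {1..n}" and w: "w = ?word \<sigma>" by blast
    have "distinct w" using permutes_inj[OF \<sigma>] by (simp add: w distinct_map inj_on_subset[of _ UNIV] del: upt_Suc)
    moreover have "set w = {1..n}" using permutes_image[OF \<sigma>] by (simp add: w atLeastLessThanSuc_atLeastAtMost del: upt_Suc)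
    ultimately show "w \<in> ?T" by (simp add: permutations_of_set_def)
  qed
  moreover have "card (?word ` ?S) = card ?T"
    using card_image[OF inj] card_permutations[of "{1..n}" n] by simp
  ultimately have img: "?word ` ?S = ?T" by (intro card_subset_eq) auto
  have "poly (alt_des_poly n) x = (\<Sum>w\<in>?word ` ?S. x ^ alt_des_list 0 w)"
    unfolding img by (simp add: alt_des_poly_def poly_sum)
  also have "\<dots> = (\<Sum>\<sigma>\<in>?S. x ^ alt_des_list 0 (?word \<sigma>))"
    by (rule sum.reindex_cong[OF inj refl refl])
  also have "\<dots> = A_hat n x"
    unfolding A_hat_def by (intro sum.cong refl) (simp add: alt_des_eq_alt_des_list permutes_inj del: upt_Suc)
  finally show ?thesis ..
qed

definition signed_word :: "nat \<Rightarrow> (int \<Rightarrow> int) \<Rightarrow> int list" where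
  "signed_word n \<pi> = map (\<lambda>j. \<pi> (int j)) [1..<Suc n]"

definition signed_perm_of :: "int list \<Rightarrow> int \<Rightarrow> int" where
  "signed_perm_of w i = (if 0 < \<bar>i\<bar> \<and> \<bar>i\<bar> \<le> int (length w) then sgn i * w ! (nat \<bar>i\<bar> - 1) else i)"

lemma signed_permsD:
  assumes "\<pi> \<in> signed_perms n"
  shows "\<pi> permutes ({- int n..int n} - {0})" "\<pi> (- i) = - \<pi> i" "\<pi> 0 = 0" "inj \<pi>"
proof -
  show p: "\<pi> permutes ({- int n..int n} - {0})" and odd: "\<pi> (- i) = - \<pi> i" for i
    using assms by (auto simp: signed_perms_def)
  show "\<pi> 0 = 0" using odd[of 0] by simp
  show "inj \<pi>" using p by (rule permutes_inj)
qed

lemma nth_signed_word: "k < n \<Longrightarrow> signed_word n \<pi> ! k = \<pi> (int k + 1)"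
  by (simp add: signed_word_def add.commute del: upt_Suc)

lemma length_signed_word [simp]: "length (signed_word n \<pi>) = n"
  by (simp add: signed_word_def)

lemma signed_word_in_signed_words:
  assumes "\<pi> \<in> signed_perms n"
  shows "signed_word n \<pi> \<in> signed_words n"
proof -
  note \<pi> = signed_permsD[OF assms]
  have abs_range: "\<bar>\<pi> (int j)\<bar> \<in> {1..int n}" if "j \<in> {1..n}" for j
    using permutes_in_image[OF \<pi>(1), of "int j"] that by auto
  have "inj_on (\<lambda>j. \<bar>\<pi> (int j)\<bar>) {1..n}"
  proof (rule inj_onI)
    fix j k assume jk: "j \<in> {1..n}" "k \<in> {1..n}" "\<bar>\<pi> (int j)\<bar> = \<bar>\<pi> (int k)\<bar>"
    then have "\<pi> (int j) = \<pi> (int k) \<or> \<pi> (int j) = \<pi> (- int k)" by (auto simp: \<pi>(2) abs_eq_iff)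
    then show "j = k" using jk(1,2) \<pi>(4) by (auto simp: inj_eq)
  qed
  then have "distinct (map abs (signed_word n \<pi>))"
    by (simp add: signed_word_def distinct_map atLeastLessThanSuc_atLeastAtMost comp_def del: upt_Suc)
  moreover have "abs ` set (signed_word n \<pi>) \<subseteq> {1..int n}"
    using abs_range by (auto simp: signed_word_def simp del: upt_Suc)
  moreover have "card (abs ` set (signed_word n \<pi>)) = n"
    using distinct_card[OF calculation(1)] by simp
  ultimately have "abs ` set (signed_word n \<pi>) = {1..int n}"
    by (intro card_subset_eq) auto
  with \<open>distinct (map abs (signed_word n \<pi>))\<close> show ?thesis
    unfolding signed_words_def permutation_lifts_iff by simp
qed

lemma signed_perm_of_signed_word:
  assumes "\<pi> \<in> signed_perms n"
  shows "signed_perm_of (signed_word n \<pi>) = \<pi>"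
proof
  fix i
  note \<pi> = signed_permsD[OF assms]
  show "signed_perm_of (signed_word n \<pi>) i = \<pi> i"
  proof (cases "0 < \<bar>i\<bar> \<and> \<bar>i\<bar> \<le> int n")
    case True
    then have "nat \<bar>i\<bar> - 1 < n" "int (nat \<bar>i\<bar> - 1) + 1 = \<bar>i\<bar>" by linarith+
    then have "signed_word n \<pi> ! (nat \<bar>i\<bar> - 1) = \<pi> \<bar>i\<bar>" by (simp only: nth_signed_word)
    then show ?thesis using True by (auto simp: signed_perm_of_def abs_if sgn_if \<pi>(2))
  next
    case False
    then have "i \<notin> {- int n..int n} - {0} \<or> i = 0" by auto
    then show ?thesis using False permutes_not_in[OF \<pi>(1)] \<pi>(3) by (auto simp: signed_perm_of_def)
  qed
qed

lemma signed_word_signed_perm_of: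
  assumes "length w = n"
  shows "signed_word n (signed_perm_of w) = w"
proof (rule nth_equalityI)
  fix k assume "k < length (signed_word n (signed_perm_of w))"
  moreover have "nat (int k + 1) - 1 = k" by simp
  ultimately show "signed_word n (signed_perm_of w) ! k = w ! k"
    using assms by (simp add: nth_signed_word signed_perm_of_def)
qed (simp add: assms)

lemma signed_perm_of_in_signed_perms:
  assumes w: "w \<in> signed_words n"
  shows "signed_perm_of w \<in> signed_perms n"
proof -
  let ?S = "{- int n..int n} - {0}" and ?\<pi> = "signed_perm_of w"
  have len: "length w = n" using w by (simp add: signed_words_def length_permutation_lifts)
  have w_abs: "distinct (map abs w)" "abs ` set w = {1..int n}"
    using w by (simp_all add: signed_words_def permutation_lifts_iff)
  have entry: "\<bar>w ! k\<bar> \<in> {1..int n}" if "k < n" for k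
    using w_abs(2) len that nth_mem by blast
  have \<pi>_in: "i \<in> ?S \<Longrightarrow> \<bar>?\<pi> i\<bar> = \<bar>w ! (nat \<bar>i\<bar> - 1)\<bar> \<and> nat \<bar>i\<bar> - 1 < n" for i
    using len by (auto simp: signed_perm_of_def abs_mult)
  have inj: "inj_on ?\<pi> ?S"
  proof (rule inj_onI)
    fix i j assume ij: "i \<in> ?S" "j \<in> ?S" "?\<pi> i = ?\<pi> j"
    then have "map abs w ! (nat \<bar>i\<bar> - 1) = map abs w ! (nat \<bar>j\<bar> - 1)"
      using \<pi>_in[of i] \<pi>_in[of j] len by simp
    then have "nat \<bar>i\<bar> - 1 = nat \<bar>j\<bar> - 1"
      using nth_eq_iff_index_eq[OF w_abs(1)] \<pi>_in[OF ij(1)] \<pi>_in[OF ij(2)] len by simp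
    then have "\<bar>i\<bar> = \<bar>j\<bar>" using ij(1,2) by auto
    have c: "w ! (nat \<bar>i\<bar> - 1) \<noteq> 0" using entry \<pi>_in[OF ij(1)] by fastforce
    have "?\<pi> i = sgn i * w ! (nat \<bar>i\<bar> - 1)" "?\<pi> j = sgn j * w ! (nat \<bar>i\<bar> - 1)"
      using ij(1,2) len \<open>\<bar>i\<bar> = \<bar>j\<bar>\<close> by (auto simp: signed_perm_of_def)
    then have "sgn i = sgn j" using ij(3) c by simp
    then show "i = j" using \<open>\<bar>i\<bar> = \<bar>j\<bar>\<close> by (metis sgn_mult_abs)
  qed
  have "?\<pi> i \<in> ?S" if "i \<in> ?S" for i
  proof -
    have "\<bar>?\<pi> i\<bar> \<in> {1..int n}" using \<pi>_in[OF that] entry by simp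
    then show ?thesis by (auto simp: abs_le_iff)
  qed
  then have "?\<pi> ` ?S \<subseteq> ?S" by (rule image_subsetI)
  with inj have "bij_betw ?\<pi> ?S ?S" by (simp add: bij_betw_def endo_inj_surj)
  moreover have "?\<pi> i = i" if "i \<notin> ?S" for i
    using that len by (auto simp: signed_perm_of_def)
  ultimately have "?\<pi> permutes ?S" by (rule bij_imp_permutes)
  moreover have "?\<pi> (- i) = - ?\<pi> i" for i by (simp add: signed_perm_of_def)
  ultimately show ?thesis by (simp add: signed_perms_def)
qed

lemma Collect_atLeastLessThan_int: "{i \<in> {0..<int n}. P i} = int ` {j. j < n \<and> P (int j)}"
  by (auto simp: image_iff) (metis nonneg_int_cases of_nat_less_iff)

lemma alt_des_B_eq_alt_des_list:
  assumes "\<pi> \<in> signed_perms n"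
  shows "alt_des_B n \<pi> = alt_des_list 1 (0 # signed_word n \<pi>)"
proof -
  note \<pi> = signed_permsD[OF assms]
  have word: "0 # signed_word n \<pi> = map (\<lambda>j. \<pi> (int j)) [0..<Suc n]"
    by (simp add: signed_word_def \<pi>(3) upt_conv_Cons del: upt_Suc)
  have "\<pi> i \<noteq> \<pi> (i + 1)" for i using \<pi>(4) by (simp add: inj_eq)
  then have "{i \<in> {0..<int n}. (\<pi> i < \<pi> (i + 1) \<and> even i) \<or> (\<pi> i > \<pi> (i + 1) \<and> odd i)} =
      {i \<in> {0..<int n}. (\<pi> i > \<pi> (i + 1)) = odd i}"
    by (intro Collect_cong conj_cong refl) (auto simp: linorder_neq_iff)
  also have "\<dots> = int ` {j. j < n \<and> (\<pi> (int j) > \<pi> (int j + 1)) = odd (int j)}"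
    by (rule Collect_atLeastLessThan_int)
  also have "{j. j < n \<and> (\<pi> (int j) > \<pi> (int j + 1)) = odd (int j)} =
      {j. j < n \<and> (\<pi> (int j) > \<pi> (int (Suc j))) = even (1 + j)}"
    by (simp add: add.commute)
  finally show ?thesis
    unfolding word alt_des_list_map_upt by (simp add: alt_des_B_def card_image)
qed

lemma B_hat_eq_poly: "B_hat n x = poly (signed_alt_des_poly n) x"
  unfolding B_hat_def signed_alt_des_poly_def poly_sum
proof (rule sum.reindex_bij_witness[where i = signed_perm_of and j = "signed_word n"])
  fix \<pi> assume "\<pi> \<in> signed_perms n"
  then show "signed_perm_of (signed_word n \<pi>) = \<pi>" "signed_word n \<pi> \<in> signed_words n"
    "poly (X ^ alt_des_list 1 (0 # signed_word n \<pi>)) x = x ^ alt_des_B n \<pi>"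
    by (simp_all add: signed_perm_of_signed_word signed_word_in_signed_words alt_des_B_eq_alt_des_list)
next
  fix w assume "w \<in> signed_words n"
  then show "signed_word n (signed_perm_of w) = w" "signed_perm_of w \<in> signed_perms n"
    by (simp_all add: signed_word_signed_perm_of signed_perm_of_in_signed_perms signed_words_def length_permutation_lifts)
qed

theorem theorem1p2:
  fixes n :: nat and x :: real
  assumes "n \<ge> 1" and "x \<noteq> 1"
  shows "2 ^ n * (1 + x^2) * A_hat n x = (1 - x) ^ (n + 1) * poly (P_hoff n) ((1 + x) / (1 - x))
         \<and> B_hat n x = (1 - x) ^ n * poly (Q_hoff n) ((1 + x) / (1 - x))"
  using alt_des_poly_hoffman[OF assms] signed_alt_des_poly_hoffman[OF assms(2)]
  by (simp add: A_hat_eq_poly B_hat_eq_poly)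

end
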